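(* Let $a\in\{0,\dots,m\}$, $b\in\{0,\dots,n\}$. For each $k=1,\dots,p$ write the dominant of $\boldsymbol A_k\sqcup\boldsymbol B_k$ as $0=c^{(k)}_{a+b}<c^{(k)}_{a+b-1}+1<\dots<c^{(k)}_{a+b-j}+j<\dots<c^{(k)}_1+a+b-1$ (this defines integers $c^{(k)}_1,\dots,c^{(k)}_{a+b}$), let $\tilde z_k=z_k+\lambda^{(k)}_{m+1}h$ and $\mathscr T_i(x)=\prod_{k=1}^p\prod_{j=1}^{c^{(k)}_i}(x-\tilde z_k+jh)$. Then \[\pi_{a,b}\prod_{j=1}^a\mathscr T_j[j]=\prod_{i=1}^a\big(T_{m-a+i}[b+i]\,T_{m+1}[i-1]\big).\]
   Context: Fix $h\in\mathbb{C}^\times$; $f[i](x)=f(x-ih)$. Polynomial $\mathfrak{gl}_{m|n}$ weights: $\lambda\in\mathbb{Z}^{m+n}_{\ge0}$, $\lambda_1\ge\dots\ge\lambda_m$, $\lambda_{m+1}\ge\dots\ge\lambda_{m+n}$, $\lambda_{m+k}=0$ for $k>\lambda_m$. Let $\boldsymbol\lambda=(\lambda^{(1)},\dots,\lambda^{(p)})$ be polynomial weights and $\boldsymbol z=(z_1,\dots,z_p)$ $h$-generic ($z_i-z_j\notin h\mathbb{Z}$, $i\ne j$). $T_i(x)=\prod_{k=1}^p\prod_{j=1}^{\lambda^{(k)}_i}(x-z_k+s_ijh)$ with $s_i=1$ for $i\le m$ and $s_i=-1$ for $i>m$. $\pi_{a,b}(x)=\prod_{k=1}^p\prod_{i=1}^a\prod_{j=1}^{\min\{b,\lambda^{(k)}_{m-i+1}\}}(x-z_k+(i+j-a-b-1)h)$.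 For each $k$: $\boldsymbol A_k=\{\lambda^{(k)}_{m-r+1}+\lambda^{(k)}_{m+1}+r-1\}_{r=1}^a$ and $\boldsymbol B_k=\{\lambda^{(k)}_{m+1}-\lambda^{(k)}_{m+r}+r-1\}_{r=1}^b$. Partitions with $r$ parts are weakly increasing sequences of nonnegative integers (multisets are sorted into partitions, $\sqcup$ is multiset union); $\boldsymbol b$ dominates $\boldsymbol a$ if $b_i\ge a_i$ for all $i$; the dominant of $\boldsymbol a$ is the smallest (with respect to dominance) partition with $r$ distinct parts dominating $\boldsymbol a$. *)

theory Defs
  imports Complex_Main
begin

text \<open>A weight lambda in Z^(m+n) is a function nat => nat, with entries lambda_1..lambda_(m+n),
  extended by zero outside {1..m+n}.\<close>
definition poly_weight :: "nat \<Rightarrow> nat \<Rightarrow> (nat \<Rightarrow> nat) \<Rightarrow> bool" where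
  "poly_weight m n lam \<longleftrightarrow>
     (\<forall>i. (i = 0 \<or> i > m + n) \<longrightarrow> lam i = 0) \<and>
     (\<forall>i j. 1 \<le> i \<and> i \<le> j \<and> j \<le> m \<longrightarrow> lam j \<le> lam i) \<and>
     (\<forall>i j. m + 1 \<le> i \<and> i \<le> j \<and> j \<le> m + n \<longrightarrow> lam j \<le> lam i) \<and>
     (0 < m \<longrightarrow> (\<forall>k. 1 \<le> k \<and> k \<le> n \<and> k > lam m \<longrightarrow> lam (m + k) = 0))"

definition h_generic :: "complex \<Rightarrow> nat \<Rightarrow> (nat \<Rightarrow> complex) \<Rightarrow> bool" where
  "h_generic h p z \<longleftrightarrow>
     (\<forall>i\<in>{1..p}. \<forall>j\<in>{1..p}. i \<noteq> j \<longrightarrow> (\<forall>t::int. z i - z j \<noteq> of_int t * h))"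

text \<open>Shift: f[i](x) = f(x - i h).\<close>
definition shift :: "complex \<Rightarrow> (complex \<Rightarrow> complex) \<Rightarrow> int \<Rightarrow> complex \<Rightarrow> complex" where
  "shift h f i x = f (x - of_int i * h)"

definition sgn_idx :: "nat \<Rightarrow> nat \<Rightarrow> int" where
  "sgn_idx m i = (if i \<le> m then 1 else -1)"

definition T_poly :: "nat \<Rightarrow> complex \<Rightarrow> nat \<Rightarrow> (nat \<Rightarrow> nat \<Rightarrow> nat) \<Rightarrow> (nat \<Rightarrow> complex)
    \<Rightarrow> nat \<Rightarrow> complex \<Rightarrow> complex" where
  "T_poly m h p lam z i x =
     (\<Prod>k=1..p. \<Prod>j=1..lam k i. (x - z k + of_int (sgn_idx m i) * of_nat j * h))"

definition pi_poly :: "nat \<Rightarrow> complex \<Rightarrow> nat \<Rightarrow> (nat \<Rightarrow> nat \<Rightarrow> nat) \<Rightarrow> (nat \<Rightarrow> complex)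
    \<Rightarrow> nat \<Rightarrow> nat \<Rightarrow> complex \<Rightarrow> complex" where
  "pi_poly m h p lam z a b x =
     (\<Prod>k=1..p. \<Prod>i=1..a. \<Prod>j=1..min b (lam k (m - i + 1)).
        (x - z k + of_int (int i + int j - int a - int b - 1) * h))"

text \<open>Partitions: weakly increasing lists of naturals; dominance is componentwise.\<close>
definition dominates :: "nat list \<Rightarrow> nat list \<Rightarrow> bool" where
  "dominates bs as \<longleftrightarrow> length bs = length as \<and> (\<forall>i < length as. as ! i \<le> bs ! i)"

definition dominant :: "nat list \<Rightarrow> nat list" where
  "dominant as = (THE d. sorted_wrt (<) d \<and> dominates d as \<and>
      (\<forall>e. sorted_wrt (<) e \<and> dominates e as \<longrightarrow> dominates e d))"

definition A_list :: "nat \<Rightarrow> (nat \<Rightarrow> nat) \<Rightarrow> nat \<Rightarrow> nat list" where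
  "A_list m lam a = map (\<lambda>r. lam (m - r + 1) + lam (m + 1) + r - 1) [1..<a+1]"

definition B_list :: "nat \<Rightarrow> (nat \<Rightarrow> nat) \<Rightarrow> nat \<Rightarrow> nat list" where
  "B_list m lam b = map (\<lambda>r. (lam (m + 1) - lam (m + r)) + r - 1) [1..<b+1]"

text \<open>The dominant d (0-indexed, increasing) satisfies d!j = c_(a+b-j) + j.\<close>
definition c_coef :: "nat \<Rightarrow> (nat \<Rightarrow> nat) \<Rightarrow> nat \<Rightarrow> nat \<Rightarrow> nat \<Rightarrow> nat" where
  "c_coef m lam a b i =
     (let d = dominant (sort (A_list m lam a @ B_list m lam b)) in d ! (a + b - i) - (a + b - i))"

definition calT :: "nat \<Rightarrow> complex \<Rightarrow> nat \<Rightarrow> (nat \<Rightarrow> nat \<Rightarrow> nat) \<Rightarrow> (nat \<Rightarrow> complex)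
    \<Rightarrow> nat \<Rightarrow> nat \<Rightarrow> nat \<Rightarrow> complex \<Rightarrow> complex" where
  "calT m h p lam z a b i x =
     (\<Prod>k=1..p. \<Prod>j=1..c_coef m (lam k) a b i.
        (x - (z k + of_nat (lam k (m + 1)) * h) + of_nat j * h))"

end

(*
  Both sides are products over k of linear factors x - z_k + t h, t ranging over integer
  intervals, and the identity holds for each k separately.

  The substance is the value of the dominant. For a sorted list e the j-th part of its dominant
  is max_{k \<le> j} (e_k + j - k), and this maximum can be read off from the values v of e and
  the number of parts below v. For e = A \<union> B the maximum at position b + t is attained at
  A_{t+1} or at A_1, which gives c_i = \<lambda>_{m+1} + max(b, \<lambda>_{m-a+i}) - b.
  With s = -i-b, L = \<lambda>_{m-a+i} and l = \<lambda>_{m+1}, the factor of \<pi>_{a,b} and of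
  calT_i[i] belonging to (k, i) then run over (s, s + min(b, L)] and (s + b - l, s + max(b, L)],
  which together are the intervals (s, s + L] and (s + b - l, s + b] of the two factors
  on the right.
*)
theory Submission
  imports Defs
begin

lemma sorted_wrt_less_nth_gap:
  assumes "sorted_wrt (<) (xs :: nat list)" "k \<le> j" "j < length xs"
  shows "xs ! k + (j - k) \<le> xs ! j"
  using assms(2,3)
proof (induction j)
  case 0
  then show ?case by simp
next
  case (Suc j)
  show ?case
  proof (cases "k = Suc j")
    case False
    then have "xs ! k + (j - k) \<le> xs ! j" using Suc by simp
    moreover have "xs ! j < xs ! Suc j"
      using assms(1) Suc.prems by (simp add: sorted_wrt_iff_nth_less)
    ultimately show ?thesis using False Suc.prems by linarith
  qed simp
qed

lemma dominates_antisym: "dominates xs ys \<Longrightarrow> dominates ys xs \<Longrightarrow> xs = ys"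
  by (rule nth_equalityI) (auto simp: dominates_def intro: order.antisym)

lemma dominant_eqI:
  assumes "sorted_wrt (<) d" "dominates d xs"
    and "\<And>e. sorted_wrt (<) e \<Longrightarrow> dominates e xs \<Longrightarrow> dominates e d"
  shows "dominant xs = d"
  unfolding dominant_def
proof (rule the_equality)
  fix d' assume "sorted_wrt (<) d' \<and> dominates d' xs \<and>
      (\<forall>e. sorted_wrt (<) e \<and> dominates e xs \<longrightarrow> dominates e d')"
  with assms show "d' = d" by (blast intro: dominates_antisym)
qed (use assms in blast)

lemma dominant_eq_Max:
  "dominant xs = map (\<lambda>j. Max ((\<lambda>k. xs ! k + j - k) ` {..j})) [0..<length xs]"
  (is "_ = ?d")
proof (rule dominant_eqI)
  have d_nth: "?d ! j = Max ((\<lambda>k. xs ! k + j - k) ` {..j})" if "j < length xs" for j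
    using that by simp
  have ge_d: "xs ! k + j - k \<le> ?d ! j" if "k \<le> j" "j < length xs" for k j
    using that by (simp add: d_nth)
  show "sorted_wrt (<) ?d"
  proof (subst sorted_wrt_iff_nth_less, intro allI impI)
    fix i j assume ij: "i < j" "j < length ?d"
    have "Max ((\<lambda>k. xs ! k + i - k) ` {..i}) \<in> (\<lambda>k. xs ! k + i - k) ` {..i}"
      by (rule Max_in) auto
    then obtain k where "k \<le> i" and "?d ! i = xs ! k + i - k"
      using ij d_nth[of i] by fastforce
    moreover have "xs ! k + j - k \<le> ?d ! j" using \<open>k \<le> i\<close> ij by (intro ge_d) auto
    ultimately show "?d ! i < ?d ! j" using ij by linarith
  qed
  show "dominates ?d xs"
    using ge_d[of j j for j] by (simp add: dominates_def)
  fix e assume e: "sorted_wrt (<) e" "dominates e xs"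
  have "xs ! k + j - k \<le> e ! j" if "k \<le> j" "j < length xs" for k j
  proof -
    have "xs ! k \<le> e ! k" using e(2) that by (simp add: dominates_def)
    moreover have "e ! k + (j - k) \<le> e ! j"
      using sorted_wrt_less_nth_gap[OF e(1) that(1)] e(2) that by (simp add: dominates_def)
    ultimately show ?thesis using that(1) by linarith
  qed
  then show "dominates e ?d"
    using e(2) by (auto simp: dominates_def d_nth)
qed

lemma nth_dominant:
  "j < length xs \<Longrightarrow> dominant xs ! j = Max ((\<lambda>k. xs ! k + j - k) ` {..j})"
  by (simp add: dominant_eq_Max)

definition count_less :: "nat list \<Rightarrow> nat \<Rightarrow> nat" where
  "count_less xs v = length (filter (\<lambda>x. x < v) xs)"

lemma count_less_sort [simp]: "count_less (sort xs) v = count_less xs v"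
  by (metis count_less_def filter_sort length_sort)

lemma count_less_append [simp]: "count_less (xs @ ys) v = count_less xs v + count_less ys v"
  by (simp add: count_less_def)

lemma count_less_map_upt:
  "count_less (map f [1..<a+1]) v = card {r \<in> {1..a}. f r < v}"
proof -
  have "count_less (map f [1..<a+1]) v = length (filter (\<lambda>r. f r < v) [1..<a+1])"
    by (simp add: count_less_def filter_map comp_def del: upt_Suc)
  also have "\<dots> = card (set (filter (\<lambda>r. f r < v) [1..<a+1]))"
    by (metis distinct_card distinct_filter distinct_upt)
  also have "set (filter (\<lambda>r. f r < v) [1..<a+1]) = {r \<in> {1..a}. f r < v}"
    by auto
  finally show ?thesis .
qed

lemma count_less_nth_le:
  assumes "sorted xs" "k < length xs"
  shows "count_less xs (xs ! k) \<le> k"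
proof -
  have "{i. i < length xs \<and> xs ! i < xs ! k} \<subseteq> {..<k}"
  proof
    fix i assume "i \<in> {i. i < length xs \<and> xs ! i < xs ! k}"
    then show "i \<in> {..<k}"
      using sorted_nth_mono[OF assms(1), of k i] by (cases "k \<le> i") auto
  qed
  then have "card {i. i < length xs \<and> xs ! i < xs ! k} \<le> k"
    by (metis card_lessThan card_mono finite_lessThan)
  then show ?thesis by (simp add: count_less_def length_filter_conv_card)
qed

lemma count_less_less_length: "v \<in> set xs \<Longrightarrow> count_less xs v < length xs"
  unfolding count_less_def by (intro length_filter_less) auto

lemma le_nth_count_less:
  assumes "sorted xs" "v \<in> set xs"
  shows "v \<le> xs ! count_less xs v"
proof (rule ccontr)
  define c where "c = count_less xs v"
  have c: "c < length xs" using count_less_less_length[OF assms(2)] by (simp add: c_def)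
  assume "\<not> v \<le> xs ! count_less xs v"
  then have "xs ! i < v" if "i \<le> c" for i
    using sorted_nth_mono[OF assms(1) that c] by (simp add: c_def)
  then have "{..c} \<subseteq> {i. i < length xs \<and> xs ! i < v}"
    using c by auto
  then have "card {..c} \<le> card {i. i < length xs \<and> xs ! i < v}"
    by (intro card_mono) auto
  also have "\<dots> = c" by (simp add: c_def count_less_def length_filter_conv_card)
  finally show False by simp
qed

lemma dominant_sort_nth_ge:
  assumes "v \<in> set xs" "count_less xs v \<le> j" "j < length xs"
  shows "v + j - count_less xs v \<le> dominant (sort xs) ! j"
proof -
  let ?c = "count_less xs v"
  have "v \<le> sort xs ! ?c"
    using le_nth_count_less[of "sort xs" v] assms(1) by simp
  also have "sort xs ! ?c + j - ?c \<le> dominant (sort xs) ! j"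
    using assms(2,3) by (simp add: nth_dominant)
  ultimately show ?thesis using assms(2) by linarith
qed

lemma dominant_sort_nth_le:
  assumes "j < length xs"
    and "\<And>v. v \<in> set xs \<Longrightarrow> count_less xs v \<le> j \<Longrightarrow> v + j \<le> M + count_less xs v"
  shows "dominant (sort xs) ! j \<le> M"
proof -
  have "sort xs ! k + j - k \<le> M" if "k \<le> j" for k
  proof -
    have k: "k < length (sort xs)" using that assms(1) by simp
    then have "count_less xs (sort xs ! k) \<le> k"
      using count_less_nth_le[of "sort xs" k] by simp
    moreover have "sort xs ! k \<in> set xs" using k by (metis nth_mem set_sort)
    ultimately show ?thesis using assms(2)[of "sort xs ! k"] that by linarith
  qed
  then show ?thesis using assms(1) by (simp add: nth_dominant)
qed

lemma card_le_of_subset_atLeastAtMost: "S \<subseteq> {1..q} \<Longrightarrow> card S \<le> q"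
  using card_mono[of "{1..q}" S] by simp

lemma card_ge_of_atLeastAtMost_subset: "{1..q} \<subseteq> S \<Longrightarrow> finite S \<Longrightarrow> q \<le> card S"
  using card_mono[of S "{1..q}"] by simp

definition A_part :: "(nat \<Rightarrow> nat) \<Rightarrow> nat \<Rightarrow> nat \<Rightarrow> nat" where
  "A_part \<mu> l r = \<mu> r + l + r - 1"

definition B_part :: "(nat \<Rightarrow> nat) \<Rightarrow> nat \<Rightarrow> nat \<Rightarrow> nat" where
  "B_part \<nu> l r = l - \<nu> r + r - 1"

definition hook_parts ::
    "(nat \<Rightarrow> nat) \<Rightarrow> (nat \<Rightarrow> nat) \<Rightarrow> nat \<Rightarrow> nat \<Rightarrow> nat \<Rightarrow> nat list" where
  "hook_parts \<mu> \<nu> l a b = map (A_part \<mu> l) [1..<a+1] @ map (B_part \<nu> l) [1..<b+1]"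

text \<open>With \<mu> r = \<lambda>_{m-r+1}, \<nu> r = \<lambda>_{m+r} and l = \<lambda>_{m+1}, \<^const>\<open>hook_parts\<close> is the
  multiset A \<union> B of the statement; the last assumption of the context below is the hook
  condition of a polynomial weight.\<close>

context
  fixes \<mu> \<nu> :: "nat \<Rightarrow> nat" and l a b :: nat
  assumes \<mu>_mono: "\<And>i j. 1 \<le> i \<Longrightarrow> i \<le> j \<Longrightarrow> j \<le> a \<Longrightarrow> \<mu> i \<le> \<mu> j"
    and \<nu>_antimono: "\<And>r s. 1 \<le> r \<Longrightarrow> r \<le> s \<Longrightarrow> s \<le> b \<Longrightarrow> \<nu> s \<le> \<nu> r"
    and \<nu>_le: "\<And>r. 1 \<le> r \<Longrightarrow> r \<le> b \<Longrightarrow> \<nu> r \<le> l"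
    and \<nu>_vanish: "\<And>r. 1 \<le> a \<Longrightarrow> 1 \<le> r \<Longrightarrow> r \<le> b \<Longrightarrow> \<mu> 1 < r \<Longrightarrow> \<nu> r = 0"
begin

lemma A_part_strict_mono:
  "1 \<le> i \<Longrightarrow> i < j \<Longrightarrow> j \<le> a \<Longrightarrow> A_part \<mu> l i < A_part \<mu> l j"
  using \<mu>_mono[of i j] by (simp add: A_part_def)

lemma B_part_strict_mono:
  "1 \<le> r \<Longrightarrow> r < s \<Longrightarrow> s \<le> b \<Longrightarrow> B_part \<nu> l r < B_part \<nu> l s"
  using \<nu>_antimono[of r s] \<nu>_le[of r] \<nu>_le[of s] by (simp add: B_part_def)

lemma B_part_less: "1 \<le> r \<Longrightarrow> r \<le> b \<Longrightarrow> B_part \<nu> l r < l + r"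
  using \<nu>_le[of r] by (simp add: B_part_def)

lemma length_hook_parts: "length (hook_parts \<mu> \<nu> l a b) = a + b"
  by (simp add: hook_parts_def)

lemma set_hook_parts:
  "set (hook_parts \<mu> \<nu> l a b) = A_part \<mu> l ` {1..a} \<union> B_part \<nu> l ` {1..b}"
  by (auto simp: hook_parts_def)

lemma count_less_hook_parts:
  "count_less (hook_parts \<mu> \<nu> l a b) v
     = card {r \<in> {1..a}. A_part \<mu> l r < v} + card {r \<in> {1..b}. B_part \<nu> l r < v}"
  unfolding hook_parts_def count_less_append count_less_map_upt ..

lemma count_less_hook_parts_A_part:
  assumes "1 \<le> i" "i \<le> a"
  shows "i - 1 + min b (\<mu> i + i - 1)
           \<le> count_less (hook_parts \<mu> \<nu> l a b) (A_part \<mu> l i)"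
proof -
  have "{1..i - 1} \<subseteq> {r \<in> {1..a}. A_part \<mu> l r < A_part \<mu> l i}"
    using A_part_strict_mono assms by auto
  then have "i - 1 \<le> card {r \<in> {1..a}. A_part \<mu> l r < A_part \<mu> l i}"
    by (rule card_ge_of_atLeastAtMost_subset) auto
  moreover have "{1..min b (\<mu> i + i - 1)} \<subseteq> {r \<in> {1..b}. B_part \<nu> l r < A_part \<mu> l i}"
    using B_part_less assms by (fastforce simp: A_part_def)
  then have "min b (\<mu> i + i - 1) \<le> card {r \<in> {1..b}. B_part \<nu> l r < A_part \<mu> l i}"
    by (rule card_ge_of_atLeastAtMost_subset) auto
  ultimately show ?thesis by (simp add: count_less_hook_parts)
qed

lemma count_less_hook_parts_B_part:
  assumes "1 \<le> r" "r \<le> b"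
  shows "r - 1 \<le> count_less (hook_parts \<mu> \<nu> l a b) (B_part \<nu> l r)"
proof -
  have "{1..r - 1} \<subseteq> {s \<in> {1..b}. B_part \<nu> l s < B_part \<nu> l r}"
    using B_part_strict_mono assms by auto
  then have "r - 1 \<le> card {s \<in> {1..b}. B_part \<nu> l s < B_part \<nu> l r}"
    by (rule card_ge_of_atLeastAtMost_subset) auto
  then show ?thesis by (simp add: count_less_hook_parts)
qed

lemma dominant_hook_parts_le:
  assumes "t < a"
  shows "dominant (sort (hook_parts \<mu> \<nu> l a b)) ! (b + t) \<le> l + t + max b (\<mu> (Suc t))"
proof (rule dominant_sort_nth_le)
  let ?e = "hook_parts \<mu> \<nu> l a b"
  show "b + t < length ?e" using assms by (simp add: length_hook_parts)
  fix v assume "v \<in> set ?e" and cnt: "count_less ?e v \<le> b + t"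
  then consider (A) i where "1 \<le> i" "i \<le> a" "v = A_part \<mu> l i"
    | (B) r where "1 \<le> r" "r \<le> b" "v = B_part \<nu> l r"
    by (auto simp: set_hook_parts)
  then show "v + (b + t) \<le> l + t + max b (\<mu> (Suc t)) + count_less ?e v"
  proof cases
    case (A i)
    note c = count_less_hook_parts_A_part[OF A(1,2), folded A(3)]
    have v: "v = \<mu> i + l + i - 1" using A by (simp add: A_part_def)
    show ?thesis
    proof (cases "i \<le> Suc t")
      case True
      then have "\<mu> i \<le> \<mu> (Suc t)" using \<mu>_mono A assms by simp
      then have "\<mu> i + b \<le> max b (\<mu> (Suc t)) + min b (\<mu> i + i - 1)"
        using A(1) unfolding min_def max_def by (simp split: if_split; linarith)
      then show ?thesis using v c A(1) by linarith
    next
      case False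
      have "\<not> b \<le> \<mu> i + i - 1"
      proof
        assume "b \<le> \<mu> i + i - 1"
        then have "i - 1 + b \<le> b + t" using c cnt by (simp add: min_def)
        then show False using False by linarith
      qed
      then have "min b (\<mu> i + i - 1) = \<mu> i + i - 1" by simp
      then show ?thesis using v c A(1) max.cobounded1[of b] by linarith
    qed
  next
    case (B r)
    then show ?thesis
      using B_part_less[OF B(1,2)] count_less_hook_parts_B_part[OF B(1,2)] max.cobounded1[of b]
      unfolding B(3) by linarith
  qed
qed

lemma A_part_Suc_le_dominant_hook_parts:
  assumes "t < a"
  shows "A_part \<mu> l (Suc t) \<le> dominant (sort (hook_parts \<mu> \<nu> l a b)) ! (b + t)"
proof -
  let ?e = "hook_parts \<mu> \<nu> l a b"
  have "{r \<in> {1..a}. A_part \<mu> l r < A_part \<mu> l (Suc t)} \<subseteq> {1..t}"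
  proof (intro subsetI)
    fix r assume "r \<in> {r \<in> {1..a}. A_part \<mu> l r < A_part \<mu> l (Suc t)}"
    then show "r \<in> {1..t}"
      using A_part_strict_mono[of "Suc t" r] by (cases "r \<le> t"; cases "r = Suc t") auto
  qed
  then have "card {r \<in> {1..a}. A_part \<mu> l r < A_part \<mu> l (Suc t)} \<le> t"
    by (rule card_le_of_subset_atLeastAtMost)
  moreover have "card {r \<in> {1..b}. B_part \<nu> l r < A_part \<mu> l (Suc t)} \<le> b"
    by (rule card_le_of_subset_atLeastAtMost) auto
  ultimately have "count_less ?e (A_part \<mu> l (Suc t)) \<le> b + t"
    by (simp add: count_less_hook_parts)
  then show ?thesis
    using dominant_sort_nth_ge[of "A_part \<mu> l (Suc t)" ?e "b + t"] assms
    by (simp add: set_hook_parts length_hook_parts)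
qed

lemma A_part_1_le_dominant_hook_parts:
  assumes "t < a"
  shows "A_part \<mu> l 1 + (b + t) - min b (\<mu> 1) \<le> dominant (sort (hook_parts \<mu> \<nu> l a b)) ! (b + t)"
proof -
  let ?e = "hook_parts \<mu> \<nu> l a b"
  have "\<not> A_part \<mu> l r < A_part \<mu> l 1" if "1 \<le> r" "r \<le> a" for r
    using A_part_strict_mono[of 1 r] that by (cases "r = 1") auto
  then have no_A: "{r \<in> {1..a}. A_part \<mu> l r < A_part \<mu> l 1} = {}" by auto
  have "{r \<in> {1..b}. B_part \<nu> l r < A_part \<mu> l 1} \<subseteq> {1..min b (\<mu> 1)}"
  proof (intro subsetI)
    fix r assume r: "r \<in> {r \<in> {1..b}. B_part \<nu> l r < A_part \<mu> l 1}"
    show "r \<in> {1..min b (\<mu> 1)}"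
    proof (rule ccontr)
      assume r_large: "r \<notin> {1..min b (\<mu> 1)}"
      then have "\<nu> r = 0" using r assms \<nu>_vanish by auto
      then show False using r r_large unfolding A_part_def B_part_def by auto
    qed
  qed
  then have "card {r \<in> {1..b}. B_part \<nu> l r < A_part \<mu> l 1} \<le> min b (\<mu> 1)"
    by (rule card_le_of_subset_atLeastAtMost)
  then have c: "count_less ?e (A_part \<mu> l 1) \<le> min b (\<mu> 1)"
    unfolding count_less_hook_parts no_A by simp
  then have "A_part \<mu> l 1 + (b + t) - count_less ?e (A_part \<mu> l 1) \<le> dominant (sort ?e) ! (b + t)"
    using dominant_sort_nth_ge[of "A_part \<mu> l 1" ?e "b + t"] assms
    by (simp add: set_hook_parts length_hook_parts)
  then show ?thesis using c by linarith
qed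

lemma dominant_hook_parts_ge:
  assumes "t < a"
  shows "l + t + max b (\<mu> (Suc t)) \<le> dominant (sort (hook_parts \<mu> \<nu> l a b)) ! (b + t)"
  using A_part_Suc_le_dominant_hook_parts[OF assms] A_part_1_le_dominant_hook_parts[OF assms]
    min.cobounded2[of b "\<mu> 1"]
  unfolding A_part_def max_def by (simp split: if_split) linarith

lemma dominant_hook_parts:
  "t < a \<Longrightarrow> dominant (sort (hook_parts \<mu> \<nu> l a b)) ! (b + t) = l + t + max b (\<mu> (Suc t))"
  using dominant_hook_parts_le dominant_hook_parts_ge by (rule order.antisym)

end

definition lin_prod :: "'a::comm_ring_1 \<Rightarrow> 'a \<Rightarrow> int \<Rightarrow> int \<Rightarrow> 'a" where
  "lin_prod h w \<alpha> \<beta> = (\<Prod>t\<in>{\<alpha><..\<beta>}. w + of_int t * h)"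

lemma prod_eq_lin_prod_up:
  "(\<Prod>j=1..c. w + of_int (\<alpha> + int j) * h) = lin_prod h w \<alpha> (\<alpha> + int c)"
  unfolding lin_prod_def
  by (rule prod.reindex_bij_witness[of _ "\<lambda>t. nat (t - \<alpha>)" "\<lambda>j. \<alpha> + int j"]) auto

lemma prod_eq_lin_prod_down:
  "(\<Prod>j=1..c. w + of_int (\<beta> + 1 - int j) * h) = lin_prod h w (\<beta> - int c) \<beta>"
  unfolding lin_prod_def
  by (rule prod.reindex_bij_witness[of _ "\<lambda>t. nat (\<beta> + 1 - t)" "\<lambda>j. \<beta> + 1 - int j"]) auto

lemma lin_prod_split:
  assumes "\<alpha> \<le> \<beta>" "\<beta> \<le> \<gamma>"
  shows "lin_prod h w \<alpha> \<gamma> = lin_prod h w \<alpha> \<beta> * lin_prod h w \<beta> \<gamma>"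
proof -
  have "{\<alpha><..\<gamma>} = {\<alpha><..\<beta>} \<union> {\<beta><..\<gamma>}" using assms by auto
  then show ?thesis unfolding lin_prod_def by (simp add: prod.union_disjoint ivl_disj_int)
qed

lemma lin_prod_min_max:
  fixes B L l :: nat
  shows "lin_prod h w (u - int B) (u - int B + int (min B L)) *
           lin_prod h w (u - int l) (u - int B + int (max B L))
       = lin_prod h w (u - int B) (u - int B + int L) * lin_prod h w (u - int l) u"
proof (cases "L \<le> B")
  case False
  then have "lin_prod h w (u - int l) (u - int B + int L)
      = lin_prod h w (u - int l) u * lin_prod h w u (u - int B + int L)"
    and "lin_prod h w (u - int B) (u - int B + int L)
      = lin_prod h w (u - int B) u * lin_prod h w u (u - int B + int L)"
    by (auto intro: lin_prod_split)
  with False show ?thesis by (simp add: max_def min_def ac_simps)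
qed (simp add: min_def max_def)

lemma poly_weight_antimono_even:
  "poly_weight m n lam \<Longrightarrow> 1 \<le> i \<Longrightarrow> i \<le> j \<Longrightarrow> j \<le> m \<Longrightarrow> lam j \<le> lam i"
  unfolding poly_weight_def by blast

lemma poly_weight_antimono_odd:
  "poly_weight m n lam \<Longrightarrow> m + 1 \<le> i \<Longrightarrow> i \<le> j \<Longrightarrow> j \<le> m + n \<Longrightarrow> lam j \<le> lam i"
  unfolding poly_weight_def by blast

lemma poly_weight_hook:
  "poly_weight m n lam \<Longrightarrow> 0 < m \<Longrightarrow> 1 \<le> k \<Longrightarrow> k \<le> n \<Longrightarrow> lam m < k \<Longrightarrow> lam (m + k) = 0"
  unfolding poly_weight_def by blast

lemma c_coef_eq:
  assumes weight: "poly_weight m n lam" and "a \<le> m" "b \<le> n" "1 \<le> i" "i \<le> a"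
  shows "c_coef m lam a b i = lam (m + 1) + max b (lam (m - a + i)) - b"
proof -
  define \<mu> where "\<mu> r = lam (m - r + 1)" for r
  define \<nu> where "\<nu> r = lam (m + r)" for r
  have parts: "A_list m lam a @ B_list m lam b = hook_parts \<mu> \<nu> (lam (m + 1)) a b"
    by (simp add: A_list_def B_list_def hook_parts_def A_part_def B_part_def \<mu>_def \<nu>_def)
  have "dominant (sort (hook_parts \<mu> \<nu> (lam (m + 1)) a b)) ! (b + (a - i))
      = lam (m + 1) + (a - i) + max b (\<mu> (Suc (a - i)))"
  proof (rule dominant_hook_parts)
    show "\<mu> r \<le> \<mu> s" if "1 \<le> r" "r \<le> s" "s \<le> a" for r s
      using that assms(2) unfolding \<mu>_def by (intro poly_weight_antimono_even[OF weight]) auto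
    show "\<nu> s \<le> \<nu> r" if "1 \<le> r" "r \<le> s" "s \<le> b" for r s
      using that assms(3) unfolding \<nu>_def by (intro poly_weight_antimono_odd[OF weight]) auto
    show "\<nu> r \<le> lam (m + 1)" if "1 \<le> r" "r \<le> b" for r
      using that assms(3) unfolding \<nu>_def by (intro poly_weight_antimono_odd[OF weight]) auto
    show "\<nu> r = 0" if "1 \<le> a" "1 \<le> r" "r \<le> b" "\<mu> 1 < r" for r
      using that assms(2,3) unfolding \<mu>_def \<nu>_def by (intro poly_weight_hook[OF weight]) auto
  qed (use assms in auto)
  moreover have "a + b - i = b + (a - i)" "m - Suc (a - i) + 1 = m - a + i"
    using assms by arith+
  ultimately show ?thesis unfolding c_coef_def Let_def parts by (simp add: \<mu>_def max_def)
qed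

lemma pi_poly_eq_lin_prod:
  assumes "a \<le> m"
  shows "pi_poly m h p lam z a b x = (\<Prod>k=1..p. \<Prod>i=1..a.
     lin_prod h (x - z k) (- int i - int b) (- int i - int b + int (min b (lam k (m - a + i)))))"
  unfolding pi_poly_def
proof (rule prod.cong[OF refl], subst prod.atLeastAtMost_rev[of _ 1 a], rule prod.cong[OF refl],
    goal_cases)
  case (1 k i)
  then have "m - (a + 1 - i) + 1 = m - a + i"
    and "int (a + 1 - i) + int j - int a - int b - 1 = - int i - int b + int j" for j
    using assms by auto
  then show ?case by (simp only: prod_eq_lin_prod_up)
qed

lemma shift_calT_eq_lin_prod:
  assumes "\<forall>k\<in>{1..p}. poly_weight m n (lam k)" "a \<le> m" "b \<le> n"
  shows "(\<Prod>j=1..a. shift h (calT m h p lam z a b j) (int j) x) = (\<Prod>k=1..p. \<Prod>i=1..a.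
     lin_prod h (x - z k) (- int i - int (lam k (m + 1)))
       (- int i - int b + int (max b (lam k (m - a + i)))))"
  unfolding shift_def calT_def
proof (subst prod.swap, rule prod.cong[OF refl], rule prod.cong[OF refl], goal_cases)
  case (1 k i)
  have c: "c_coef m (lam k) a b i = lam k (m + 1) + max b (lam k (m - a + i)) - b"
    using 1 assms by (intro c_coef_eq) auto
  have "x - of_int (int i) * h - (z k + of_nat (lam k (m + 1)) * h) + of_nat j * h
      = x - z k + of_int (- int i - int (lam k (m + 1)) + int j) * h" for j
    by (simp add: algebra_simps)
  moreover have "- int i - int (lam k (m + 1)) + int (c_coef m (lam k) a b i)
      = - int i - int b + int (max b (lam k (m - a + i)))"
    unfolding c by (simp add: max_def)
  ultimately show ?case by (simp only: prod_eq_lin_prod_up)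
qed

lemma prod_shift_T_poly_eq_lin_prod:
  assumes "a \<le> m"
  shows "(\<Prod>i=1..a. shift h (T_poly m h p lam z (m - a + i)) (int (b + i)) x) = (\<Prod>k=1..p. \<Prod>i=1..a.
     lin_prod h (x - z k) (- int i - int b) (- int i - int b + int (lam k (m - a + i))))"
  unfolding shift_def T_poly_def
proof (subst prod.swap, rule prod.cong[OF refl], rule prod.cong[OF refl], goal_cases)
  case (1 k i)
  then have "m - a + i \<le> m" using assms by auto
  then have "sgn_idx m (m - a + i) = 1" by (simp add: sgn_idx_def)
  then have "x - of_int (int (b + i)) * h - z k + of_int (sgn_idx m (m - a + i)) * of_nat j * h
      = x - z k + of_int (- int i - int b + int j) * h" for j
    by (simp add: algebra_simps)
  then show ?case by (simp only: prod_eq_lin_prod_up)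
qed

lemma prod_shift_T_poly_succ_eq_lin_prod:
  "(\<Prod>i=1..a. shift h (T_poly m h p lam z (m + 1)) (int i - 1) x)
     = (\<Prod>k=1..p. \<Prod>i=1..a. lin_prod h (x - z k) (- int i - int (lam k (m + 1))) (- int i))"
proof -
  have "x - of_int (int i - 1) * h - z k + of_int (sgn_idx m (m + 1)) * of_nat j * h
      = x - z k + of_int (- int i + 1 - int j) * h" for i k j
    by (simp add: sgn_idx_def algebra_simps)
  then show ?thesis
    unfolding shift_def T_poly_def by (simp only: prod_eq_lin_prod_down prod.swap[of _ "{1..a}"])
qed

theorem proposition6p5:
  fixes m n p a b :: nat and h :: complex
    and lam :: "nat \<Rightarrow> nat \<Rightarrow> nat" and z :: "nat \<Rightarrow> complex"
  assumes "h \<noteq> 0"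
    and "\<forall>k\<in>{1..p}. poly_weight m n (lam k)"
    and "h_generic h p z"
    and "a \<le> m" and "b \<le> n"
  shows "\<forall>x. pi_poly m h p lam z a b x *
             (\<Prod>j=1..a. shift h (calT m h p lam z a b j) (int j) x)
           = (\<Prod>i=1..a. shift h (T_poly m h p lam z (m - a + i)) (int (b + i)) x *
                        shift h (T_poly m h p lam z (m + 1)) (int i - 1) x)"
  unfolding prod.distrib pi_poly_eq_lin_prod[OF assms(4)] shift_calT_eq_lin_prod[OF assms(2,4,5)]
    prod_shift_T_poly_eq_lin_prod[OF assms(4)] prod_shift_T_poly_succ_eq_lin_prod
  unfolding prod.distrib[symmetric] lin_prod_min_max
  by simp

end
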